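(* Let $G$ be a finite permutation group acting quasi-transitively on a finite set $\Omega$, with constant $t>1$, and suppose $G$ is not transitive on $\Omega$. If $G$ acts $2$-transitively on a $G$-orbit $\Delta$, then $|G|=|\Delta|(|\Delta|-1)t$. Consequently $G$ acts $2$-transitively on at most one of its orbits on $\Omega$.
   Context: A finite permutation group $G$ on a finite set $\Omega$ is called quasi-transitive if there is a natural number $t>1$ such that $|G_{\alpha\beta}|=t$ for all two-element subsets $\{\alpha,\beta\}\subseteq\Omega$, where $G_{\alpha\beta}$ denotes the pointwise stabiliser of $\alpha$ and $\beta$ in $G$. *)

theory Defs
  imports "HOL-Algebra.Bij"
begin

text \<open>A permutation group on Omega is a subgroup G of the symmetric group BijGroup Omega.\<close>

definition pw_stab2 :: "('a \<Rightarrow> 'a) set \<Rightarrow> 'a \<Rightarrow> 'a \<Rightarrow> ('a \<Rightarrow> 'a) set" where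
  "pw_stab2 G \<alpha> \<beta> = {g \<in> G. g \<alpha> = \<alpha> \<and> g \<beta> = \<beta>}"

definition quasi_transitive_with :: "('a \<Rightarrow> 'a) set \<Rightarrow> 'a set \<Rightarrow> nat \<Rightarrow> bool" where
  "quasi_transitive_with G \<Omega> t \<longleftrightarrow> t > 1 \<and>
     (\<forall>\<alpha>\<in>\<Omega>. \<forall>\<beta>\<in>\<Omega>. \<alpha> \<noteq> \<beta> \<longrightarrow> card (pw_stab2 G \<alpha> \<beta>) = t)"

definition transitive_on :: "('a \<Rightarrow> 'a) set \<Rightarrow> 'a set \<Rightarrow> bool" where
  "transitive_on G \<Omega> \<longleftrightarrow> (\<forall>\<alpha>\<in>\<Omega>. \<forall>\<beta>\<in>\<Omega>. \<exists>g\<in>G. g \<alpha> = \<beta>)"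

definition orbit_of :: "('a \<Rightarrow> 'a) set \<Rightarrow> 'a \<Rightarrow> 'a set" where
  "orbit_of G \<alpha> = (\<lambda>g. g \<alpha>) ` G"

definition is_orbit :: "('a \<Rightarrow> 'a) set \<Rightarrow> 'a set \<Rightarrow> 'a set \<Rightarrow> bool" where
  "is_orbit G \<Omega> \<Delta> \<longleftrightarrow> (\<exists>\<alpha>\<in>\<Omega>. \<Delta> = orbit_of G \<alpha>)"

definition two_transitive_on :: "('a \<Rightarrow> 'a) set \<Rightarrow> 'a set \<Rightarrow> bool" where
  "two_transitive_on G \<Delta> \<longleftrightarrow> card \<Delta> \<ge> 2 \<and>
     (\<forall>\<alpha>\<in>\<Delta>. \<forall>\<beta>\<in>\<Delta>. \<forall>\<gamma>\<in>\<Delta>. \<forall>\<delta>\<in>\<Delta>. \<alpha> \<noteq> \<beta> \<longrightarrow> \<gamma> \<noteq> \<delta> \<longrightarrow>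
        (\<exists>g\<in>G. g \<alpha> = \<gamma> \<and> g \<beta> = \<delta>))"

end

theory Submission
  imports Defs "HOL-Algebra.Group_Action"
begin

text \<open>
  For a 2-transitive orbit \<open>\<Delta> \<ni> \<alpha>\<close>, the point stabiliser \<open>G\<^sub>\<alpha>\<close> is transitive on
  \<open>\<Delta> - {\<alpha>}\<close> with two-point stabilisers of order \<open>t\<close>, so \<open>|G\<^sub>\<alpha>| = (|\<Delta>| - 1) t\<close> and
  \<open>|G| = |\<Delta>| (|\<Delta>| - 1) t\<close>. Given a second 2-transitive orbit \<open>\<Delta>'\<close>, the same formula
  forces \<open>|\<Delta>'| = |\<Delta>| = n\<close>, and every \<open>G\<^sub>\<alpha>\<close>-orbit on \<open>\<Delta>'\<close> has size \<open>|G\<^sub>\<alpha>| / t = n - 1\<close>.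
  Two disjoint such orbits fit into \<open>\<Delta>'\<close> only if \<open>n = 2\<close>; then \<open>|G\<^sub>\<alpha>| = t\<close>, so \<open>G\<^sub>\<alpha>\<close>
  coincides with every two-point stabiliser \<open>G\<^sub>\<alpha>\<^sub>\<gamma>\<close>, fixes all of \<open>\<Omega>\<close>, and is trivial,
  contradicting \<open>t > 1\<close>.
\<close>

lemma group_action_subgroup_BijGroup:
  assumes "subgroup H (BijGroup \<Omega>)"
  shows "group_action (BijGroup \<Omega>\<lparr>carrier := H\<rparr>) \<Omega> (\<lambda>g. g)"
proof -
  have "group (BijGroup \<Omega>\<lparr>carrier := H\<rparr>)"
    using subgroup.subgroup_is_group[OF assms group_BijGroup] .
  moreover have "(\<lambda>g. g) \<in> hom (BijGroup \<Omega>\<lparr>carrier := H\<rparr>) (BijGroup \<Omega>)"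
    using subgroup.subset[OF assms] by (auto simp: hom_def)
  ultimately show ?thesis
    by (simp add: group_action_def group_hom_def group_hom_axioms_def group_BijGroup)
qed

lemma orbit_stabilizer_BijGroup:
  assumes "subgroup H (BijGroup \<Omega>)" and "\<alpha> \<in> \<Omega>"
  shows "card (orbit_of H \<alpha>) * card {h \<in> H. h \<alpha> = \<alpha>} = card H"
proof -
  have "orbit (BijGroup \<Omega>\<lparr>carrier := H\<rparr>) (\<lambda>g. g) \<alpha> = orbit_of H \<alpha>"
    by (auto simp: orbit_def orbit_of_def)
  moreover have "stabilizer (BijGroup \<Omega>\<lparr>carrier := H\<rparr>) (\<lambda>g. g) \<alpha> = {h \<in> H. h \<alpha> = \<alpha>}"
    by (simp add: stabilizer_def)
  ultimately show ?thesis
    using group_action.orbit_stabilizer_theorem[OF group_action_subgroup_BijGroup[OF assms(1)] assms(2)]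
    by (simp add: order_def)
qed

lemma subgroup_point_stabilizer_BijGroup:
  assumes "subgroup H (BijGroup \<Omega>)" and "\<alpha> \<in> \<Omega>"
  shows "subgroup {h \<in> H. h \<alpha> = \<alpha>} (BijGroup \<Omega>)"
proof -
  have "stabilizer (BijGroup \<Omega>\<lparr>carrier := H\<rparr>) (\<lambda>g. g) \<alpha> = {h \<in> H. h \<alpha> = \<alpha>}"
    by (simp add: stabilizer_def)
  then show ?thesis
    using group_action.stabilizer_subgroup[OF group_action_subgroup_BijGroup[OF assms(1)] assms(2)]
      group.incl_subgroup[OF group_BijGroup assms(1)] by simp
qed

lemma orbit_of_disjoint:
  assumes "subgroup H (BijGroup \<Omega>)" and "\<alpha> \<in> \<Omega>" and "\<beta> \<in> \<Omega>"
    and "orbit_of H \<alpha> \<noteq> orbit_of H \<beta>"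
  shows "orbit_of H \<alpha> \<inter> orbit_of H \<beta> = {}"
proof -
  let ?orb = "orbit (BijGroup \<Omega>\<lparr>carrier := H\<rparr>) (\<lambda>g. g)"
  have orb: "?orb x = orbit_of H x" for x
    by (auto simp: orbit_def orbit_of_def)
  have "?orb \<alpha> \<in> orbits (BijGroup \<Omega>\<lparr>carrier := H\<rparr>) \<Omega> (\<lambda>g. g)"
       "?orb \<beta> \<in> orbits (BijGroup \<Omega>\<lparr>carrier := H\<rparr>) \<Omega> (\<lambda>g. g)"
    using assms(2,3) by (auto simp: orbits_def)
  then show ?thesis
    using group_action.disjoint_union[OF group_action_subgroup_BijGroup[OF assms(1)]] assms(4)
    unfolding orb by blast
qed

lemma orbit_of_subset:
  assumes "subgroup H (BijGroup \<Omega>)" and "\<alpha> \<in> \<Omega>"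
  shows "orbit_of H \<alpha> \<subseteq> \<Omega>"
  using subgroup.subset[OF assms(1)] assms(2)
  by (auto simp: orbit_of_def BijGroup_def) (meson Bij_imp_funcset funcset_mem subsetD)

lemma orbit_of_self:
  assumes "subgroup H (BijGroup \<Omega>)" and "\<alpha> \<in> \<Omega>"
  shows "\<alpha> \<in> orbit_of H \<alpha>"
  using group_action.orbit_refl[OF group_action_subgroup_BijGroup[OF assms(1)] assms(2)]
  by (auto simp: orbit_def orbit_of_def)

lemma finite_subgroup_BijGroup:
  assumes "subgroup H (BijGroup \<Omega>)" and "finite \<Omega>"
  shows "finite H"
proof (rule finite_subset)
  show "H \<subseteq> \<Omega> \<rightarrow>\<^sub>E \<Omega>"
    using subgroup.subset[OF assms(1)] by (auto simp: BijGroup_def Bij_def bij_betw_def PiE_def)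
  show "finite (\<Omega> \<rightarrow>\<^sub>E \<Omega>)"
    using assms(2) by (simp add: finite_PiE)
qed

lemma BijGroup_eq_one_if_fixes:
  assumes "g \<in> carrier (BijGroup \<Omega>)" and "\<And>x. x \<in> \<Omega> \<Longrightarrow> g x = x"
  shows "g = \<one>\<^bsub>BijGroup \<Omega>\<^esub>"
  using assms by (auto simp: BijGroup_def Bij_def intro!: extensionalityI)

lemma orbit_of_eq_if_mem:
  assumes "subgroup H (BijGroup \<Omega>)" and "\<alpha> \<in> \<Omega>" and "\<beta> \<in> orbit_of H \<alpha>"
  shows "orbit_of H \<beta> = orbit_of H \<alpha>"
proof -
  have "\<beta> \<in> \<Omega>"
    using orbit_of_subset[OF assms(1,2)] assms(3) by blast
  then show ?thesis
    using orbit_of_disjoint[OF assms(1) _ assms(2)] orbit_of_self[OF assms(1)] assms(3) by blast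
qed

lemma diff_one_mult_self_inject:
  fixes m n :: nat
  assumes "m \<ge> 1" and "n \<ge> 1" and "m * (m - 1) = n * (n - 1)"
  shows "m = n"
proof -
  have less: "a * (a - 1) < b * (b - 1)" if "(a::nat) \<ge> 1" and "a < b" for a b
  proof -
    have "a * (a - 1) \<le> a * (b - 1)" using that by simp
    also have "\<dots> < b * (b - 1)" using that by simp
    finally show ?thesis .
  qed
  show ?thesis
    using less[of m n] less[of n m] assms by (metis less_irrefl nat_neq_iff)
qed

definition point_stabilizer :: "('a \<Rightarrow> 'a) set \<Rightarrow> 'a \<Rightarrow> ('a \<Rightarrow> 'a) set" where
  "point_stabilizer G \<alpha> = {g \<in> G. g \<alpha> = \<alpha>}"

lemma card_orbit_point_stabilizer_mult:
  assumes "subgroup G (BijGroup \<Omega>)" and "quasi_transitive_with G \<Omega> t"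
    and "\<alpha> \<in> \<Omega>" and "\<beta> \<in> \<Omega>" and "\<alpha> \<noteq> \<beta>"
  shows "card (orbit_of (point_stabilizer G \<alpha>) \<beta>) * t = card (point_stabilizer G \<alpha>)"
proof -
  have "card (pw_stab2 G \<alpha> \<beta>) = t"
    using assms(2-5) by (simp add: quasi_transitive_with_def)
  then show ?thesis
    using orbit_stabilizer_BijGroup[OF subgroup_point_stabilizer_BijGroup[OF assms(1,3)] assms(4)]
    by (simp add: point_stabilizer_def pw_stab2_def conj_assoc)
qed

lemma orbit_point_stabilizer_two_transitive:
  assumes "subgroup G (BijGroup \<Omega>)" and "\<alpha> \<in> \<Omega>"
    and "two_transitive_on G (orbit_of G \<alpha>)"
    and "\<beta> \<in> orbit_of G \<alpha>" and "\<beta> \<noteq> \<alpha>"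
  shows "orbit_of (point_stabilizer G \<alpha>) \<beta> = orbit_of G \<alpha> - {\<alpha>}"
proof
  have \<beta>: "\<beta> \<in> \<Omega>"
    using orbit_of_subset[OF assms(1,2)] assms(4) by blast
  show "orbit_of (point_stabilizer G \<alpha>) \<beta> \<subseteq> orbit_of G \<alpha> - {\<alpha>}"
  proof
    fix \<gamma> assume "\<gamma> \<in> orbit_of (point_stabilizer G \<alpha>) \<beta>"
    then obtain g where g: "g \<in> G" "g \<alpha> = \<alpha>" and \<gamma>: "\<gamma> = g \<beta>"
      by (auto simp: orbit_of_def point_stabilizer_def)
    have "\<gamma> \<in> orbit_of G \<beta>"
      using g \<gamma> by (simp add: orbit_of_def)
    moreover have "inj_on g \<Omega>"
      using subgroup.subset[OF assms(1)] g(1) by (auto simp: BijGroup_def Bij_def bij_betw_def)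
    then have "\<gamma> \<noteq> \<alpha>"
      using g(2) \<gamma> assms(2,5) \<beta> by (metis inj_on_eq_iff)
    ultimately show "\<gamma> \<in> orbit_of G \<alpha> - {\<alpha>}"
      using orbit_of_eq_if_mem[OF assms(1,2,4)] by blast
  qed
  show "orbit_of G \<alpha> - {\<alpha>} \<subseteq> orbit_of (point_stabilizer G \<alpha>) \<beta>"
  proof
    fix \<gamma> assume \<gamma>: "\<gamma> \<in> orbit_of G \<alpha> - {\<alpha>}"
    obtain g where "g \<in> G" "g \<alpha> = \<alpha>" "g \<beta> = \<gamma>"
      using assms(3) orbit_of_self[OF assms(1,2)] assms(4,5) \<gamma>
      unfolding two_transitive_on_def by (metis DiffE singletonI)
    then show "\<gamma> \<in> orbit_of (point_stabilizer G \<alpha>) \<beta>"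
      by (auto simp: orbit_of_def point_stabilizer_def)
  qed
qed

lemma card_point_stabilizer_two_transitive:
  assumes "finite \<Omega>" and "subgroup G (BijGroup \<Omega>)" and "quasi_transitive_with G \<Omega> t"
    and "\<alpha> \<in> \<Omega>" and "two_transitive_on G (orbit_of G \<alpha>)"
  shows "card (point_stabilizer G \<alpha>) = (card (orbit_of G \<alpha>) - 1) * t"
proof -
  let ?\<Delta> = "orbit_of G \<alpha>"
  have "finite ?\<Delta>"
    using orbit_of_subset[OF assms(2,4)] assms(1) finite_subset by blast
  moreover have "\<alpha> \<in> ?\<Delta>"
    using orbit_of_self[OF assms(2,4)] .
  moreover have "card ?\<Delta> \<ge> 2"
    using assms(5) by (simp add: two_transitive_on_def)
  ultimately have "\<not> ?\<Delta> \<subseteq> {\<alpha>}"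
    using card_mono[of "{\<alpha>}" ?\<Delta>] by auto
  then obtain \<beta> where \<beta>: "\<beta> \<in> ?\<Delta>" "\<beta> \<noteq> \<alpha>"
    by blast
  have "\<beta> \<in> \<Omega>"
    using orbit_of_subset[OF assms(2,4)] \<beta>(1) by blast
  then have "card (point_stabilizer G \<alpha>) = card (orbit_of (point_stabilizer G \<alpha>) \<beta>) * t"
    using card_orbit_point_stabilizer_mult[OF assms(2-4)] \<beta>(2) by simp
  also have "orbit_of (point_stabilizer G \<alpha>) \<beta> = ?\<Delta> - {\<alpha>}"
    using orbit_point_stabilizer_two_transitive[OF assms(2,4,5) \<beta>] .
  finally show ?thesis
    using \<open>finite ?\<Delta>\<close> \<open>\<alpha> \<in> ?\<Delta>\<close> by simp
qed

lemma card_two_transitive_orbit: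
  assumes "finite \<Omega>" and "subgroup G (BijGroup \<Omega>)" and "quasi_transitive_with G \<Omega> t"
    and "\<alpha> \<in> \<Omega>" and "two_transitive_on G (orbit_of G \<alpha>)"
  shows "card G = card (orbit_of G \<alpha>) * (card (orbit_of G \<alpha>) - 1) * t"
  using orbit_stabilizer_BijGroup[OF assms(2,4)] card_point_stabilizer_two_transitive[OF assms]
  by (simp add: point_stabilizer_def)

lemma card_point_stabilizer_neq:
  assumes "finite \<Omega>" and "subgroup G (BijGroup \<Omega>)" and "quasi_transitive_with G \<Omega> t"
    and "\<alpha> \<in> \<Omega>"
  shows "card (point_stabilizer G \<alpha>) \<noteq> t"
proof
  assume card_eq: "card (point_stabilizer G \<alpha>) = t"
  have fin: "finite (point_stabilizer G \<alpha>)"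
    using finite_subgroup_BijGroup[OF assms(2,1)] by (simp add: point_stabilizer_def)
  have fixes_all: "g \<gamma> = \<gamma>" if g: "g \<in> point_stabilizer G \<alpha>" and \<gamma>: "\<gamma> \<in> \<Omega>" for g \<gamma>
  proof (cases "\<gamma> = \<alpha>")
    case True
    then show ?thesis using g by (simp add: point_stabilizer_def)
  next
    case False
    have "pw_stab2 G \<alpha> \<gamma> \<subseteq> point_stabilizer G \<alpha>"
      by (auto simp: pw_stab2_def point_stabilizer_def)
    moreover have "card (pw_stab2 G \<alpha> \<gamma>) = card (point_stabilizer G \<alpha>)"
      using assms(3,4) \<gamma> False card_eq by (simp add: quasi_transitive_with_def)
    ultimately have "pw_stab2 G \<alpha> \<gamma> = point_stabilizer G \<alpha>"
      using card_subset_eq[OF fin] by blast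
    then show ?thesis
      using g by (auto simp: pw_stab2_def)
  qed
  have "point_stabilizer G \<alpha> \<subseteq> {\<one>\<^bsub>BijGroup \<Omega>\<^esub>}"
  proof
    fix g assume g: "g \<in> point_stabilizer G \<alpha>"
    then have "g \<in> carrier (BijGroup \<Omega>)"
      using subgroup.subset[OF assms(2)] by (auto simp: point_stabilizer_def)
    then show "g \<in> {\<one>\<^bsub>BijGroup \<Omega>\<^esub>}"
      using BijGroup_eq_one_if_fixes fixes_all[OF g] by blast
  qed
  then have "card (point_stabilizer G \<alpha>) \<le> 1"
    using card_mono[of "{\<one>\<^bsub>BijGroup \<Omega>\<^esub>}"] by fastforce
  then show False
    using card_eq assms(3) by (simp add: quasi_transitive_with_def)
qed

lemma card_orbit_point_stabilizer:
  assumes "finite \<Omega>" and "subgroup G (BijGroup \<Omega>)" and "quasi_transitive_with G \<Omega> t"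
    and "\<alpha> \<in> \<Omega>" and "two_transitive_on G (orbit_of G \<alpha>)"
    and "\<beta> \<in> \<Omega>" and "\<beta> \<noteq> \<alpha>"
  shows "card (orbit_of (point_stabilizer G \<alpha>) \<beta>) = card (orbit_of G \<alpha>) - 1"
proof -
  have "card (orbit_of (point_stabilizer G \<alpha>) \<beta>) * t = (card (orbit_of G \<alpha>) - 1) * t"
    using card_orbit_point_stabilizer_mult[OF assms(2-4,6)] assms(7)
      card_point_stabilizer_two_transitive[OF assms(1-5)] by simp
  moreover have "t > 0"
    using assms(3) by (simp add: quasi_transitive_with_def)
  ultimately show ?thesis
    by simp
qed

lemma card_two_transitive_orbits_eq:
  assumes "finite \<Omega>" and "subgroup G (BijGroup \<Omega>)" and "quasi_transitive_with G \<Omega> t"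
    and "\<alpha> \<in> \<Omega>" and "two_transitive_on G (orbit_of G \<alpha>)"
    and "\<beta> \<in> \<Omega>" and "two_transitive_on G (orbit_of G \<beta>)"
  shows "card (orbit_of G \<alpha>) = card (orbit_of G \<beta>)"
proof -
  have "card (orbit_of G \<alpha>) * (card (orbit_of G \<alpha>) - 1) * t
      = card (orbit_of G \<beta>) * (card (orbit_of G \<beta>) - 1) * t"
    using card_two_transitive_orbit[OF assms(1-5), symmetric]
      card_two_transitive_orbit[OF assms(1-3,6,7)] by (rule trans)
  moreover have "t > 0"
    using assms(3) by (simp add: quasi_transitive_with_def)
  ultimately have "card (orbit_of G \<alpha>) * (card (orbit_of G \<alpha>) - 1)
      = card (orbit_of G \<beta>) * (card (orbit_of G \<beta>) - 1)"
    by simp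
  moreover have "card (orbit_of G \<alpha>) \<ge> 1" "card (orbit_of G \<beta>) \<ge> 1"
    using assms(5,7) by (simp_all add: two_transitive_on_def)
  ultimately show ?thesis
    using diff_one_mult_self_inject by blast
qed

lemma card_two_transitive_orbit_eq_2:
  assumes "finite \<Omega>" and "subgroup G (BijGroup \<Omega>)" and "quasi_transitive_with G \<Omega> t"
    and "\<alpha> \<in> \<Omega>" and "two_transitive_on G (orbit_of G \<alpha>)"
    and "\<beta> \<in> \<Omega>" and "two_transitive_on G (orbit_of G \<beta>)"
    and "orbit_of G \<alpha> \<noteq> orbit_of G \<beta>"
  shows "card (orbit_of G \<alpha>) = 2"
proof -
  define n where "n = card (orbit_of G \<alpha>)"
  define K where "K = point_stabilizer G \<alpha>"
  have K: "subgroup K (BijGroup \<Omega>)"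
    using subgroup_point_stabilizer_BijGroup[OF assms(2,4)] by (simp add: K_def point_stabilizer_def)
  have n: "n \<ge> 2"
    using assms(5) by (simp add: n_def two_transitive_on_def)
  have card_\<beta>: "card (orbit_of G \<beta>) = n"
    using card_two_transitive_orbits_eq[OF assms(1-7)] by (simp add: n_def)
  have K_orbit: "card (orbit_of K \<gamma>) = n - 1" "orbit_of K \<gamma> \<subseteq> orbit_of G \<beta>"
    if \<gamma>: "\<gamma> \<in> orbit_of G \<beta>" for \<gamma>
  proof -
    have "\<gamma> \<in> \<Omega>"
      using orbit_of_subset[OF assms(2,6)] \<gamma> by blast
    moreover have "\<gamma> \<noteq> \<alpha>"
      using orbit_of_disjoint[OF assms(2,4,6,8)] orbit_of_self[OF assms(2,4)] \<gamma> by blast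
    ultimately show "card (orbit_of K \<gamma>) = n - 1"
      using card_orbit_point_stabilizer[OF assms(1-5)] by (simp add: K_def n_def)
    have "orbit_of K \<gamma> \<subseteq> orbit_of G \<gamma>"
      by (auto simp: orbit_of_def K_def point_stabilizer_def)
    then show "orbit_of K \<gamma> \<subseteq> orbit_of G \<beta>"
      using orbit_of_eq_if_mem[OF assms(2,6) \<gamma>] by simp
  qed
  have fin: "finite (orbit_of G \<beta>)"
    using orbit_of_subset[OF assms(2,6)] assms(1) finite_subset by blast
  have \<beta>: "\<beta> \<in> orbit_of G \<beta>"
    using orbit_of_self[OF assms(2,6)] .
  have "\<not> orbit_of G \<beta> \<subseteq> orbit_of K \<beta>"
  proof
    assume "orbit_of G \<beta> \<subseteq> orbit_of K \<beta>"
    then have "n \<le> n - 1"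
      using card_mono[OF finite_subset[OF K_orbit(2)[OF \<beta>] fin]] K_orbit(1)[OF \<beta>] card_\<beta>
      by metis
    then show False
      using n by simp
  qed
  then obtain \<gamma> where \<gamma>: "\<gamma> \<in> orbit_of G \<beta>" "\<gamma> \<notin> orbit_of K \<beta>"
    by blast
  have "\<gamma> \<in> orbit_of K \<gamma>"
    using orbit_of_self[OF K] orbit_of_subset[OF assms(2,6)] \<gamma>(1) by blast
  then have "orbit_of K \<beta> \<inter> orbit_of K \<gamma> = {}"
    using orbit_of_disjoint[OF K] orbit_of_subset[OF assms(2,6)] \<beta> \<gamma> by blast
  then have "card (orbit_of K \<beta>) + card (orbit_of K \<gamma>) = card (orbit_of K \<beta> \<union> orbit_of K \<gamma>)"
    using card_Un_disjoint finite_subset[OF K_orbit(2) fin] \<beta> \<gamma>(1) by metis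
  also have "\<dots> \<le> n"
    using card_mono[OF fin] K_orbit(2)[OF \<beta>] K_orbit(2)[OF \<gamma>(1)] card_\<beta> by simp
  finally have "(n - 1) + (n - 1) \<le> n"
    using K_orbit(1)[OF \<beta>] K_orbit(1)[OF \<gamma>(1)] by simp
  then show ?thesis
    using n by (simp add: n_def)
qed

lemma two_transitive_orbits_eq:
  assumes "finite \<Omega>" and "subgroup G (BijGroup \<Omega>)" and "quasi_transitive_with G \<Omega> t"
    and "\<alpha> \<in> \<Omega>" and "two_transitive_on G (orbit_of G \<alpha>)"
    and "\<beta> \<in> \<Omega>" and "two_transitive_on G (orbit_of G \<beta>)"
  shows "orbit_of G \<alpha> = orbit_of G \<beta>"
proof (rule ccontr)
  assume "orbit_of G \<alpha> \<noteq> orbit_of G \<beta>"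
  then have "card (orbit_of G \<alpha>) = 2"
    using card_two_transitive_orbit_eq_2[OF assms] by blast
  then have "card (point_stabilizer G \<alpha>) = t"
    using card_point_stabilizer_two_transitive[OF assms(1-5)] by simp
  then show False
    using card_point_stabilizer_neq[OF assms(1-4)] by blast
qed

theorem mainTheorem5:
  fixes G :: "('a \<Rightarrow> 'a) set" and \<Omega> :: "'a set" and t :: nat
  assumes "finite \<Omega>"
    and "subgroup G (BijGroup \<Omega>)"
    and "quasi_transitive_with G \<Omega> t"
    and "\<not> transitive_on G \<Omega>"
  shows "(\<forall>\<Delta>. is_orbit G \<Omega> \<Delta> \<and> two_transitive_on G \<Delta> \<longrightarrow>
            card G = card \<Delta> * (card \<Delta> - 1) * t)
       \<and> (\<forall>\<Delta>1 \<Delta>2. is_orbit G \<Omega> \<Delta>1 \<and> two_transitive_on G \<Delta>1 \<and>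
            is_orbit G \<Omega> \<Delta>2 \<and> two_transitive_on G \<Delta>2 \<longrightarrow> \<Delta>1 = \<Delta>2)"
proof -
  have "card G = card \<Delta> * (card \<Delta> - 1) * t"
    if "is_orbit G \<Omega> \<Delta>" and "two_transitive_on G \<Delta>" for \<Delta>
    using that card_two_transitive_orbit[OF assms(1-3)] by (auto simp: is_orbit_def)
  moreover have "\<Delta>1 = \<Delta>2"
    if "is_orbit G \<Omega> \<Delta>1" "two_transitive_on G \<Delta>1" "is_orbit G \<Omega> \<Delta>2" "two_transitive_on G \<Delta>2"
    for \<Delta>1 \<Delta>2
    using that two_transitive_orbits_eq[OF assms(1-3)] by (auto simp: is_orbit_def)
  ultimately show ?thesis
    by blast
qed

end
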